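(* Let $n$ be a positive integer and let $\frac{a_1}{b_1} < \frac{a_2}{b_2} < \cdots$ be the Farey sequence of order $n$. Let $k \le l$ be indices and let $\frac{a}{b}$ (in lowest terms) be a fraction of the Farey sequence of order $n$ with $\frac{a_k}{b_k} \le \frac{a}{b} \le \frac{a_l}{b_l}$. If $l - k \le \frac{n+b+1}{2b}$, then $(a_l - a_k)(b_l - b_k) \ge 0$.
   Context: The Farey sequence of order $n$ is the increasing list of all reduced fractions $\frac{a}{b}$ with $0 \le \frac{a}{b} \le 1$ and $1 \le b \le n$ (including $\frac01$ and $\frac11$), each written in lowest terms, indexed in increasing order. Two fractions $\frac{a}{b}, \frac{a'}{b'}$ in lowest terms are called similarly ordered if $(a'-a)(b'-b) \ge 0$. *)

theory Defs
  imports "HOL-Analysis.Analysis"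
begin

definition farey_set :: "nat \<Rightarrow> rat set" where
  "farey_set n = {q. 0 \<le> q \<and> q \<le> 1 \<and> snd (quotient_of q) \<le> int n}"

definition farey :: "nat \<Rightarrow> rat list" where
  "farey n = sorted_list_of_set (farey_set n)"

definition num :: "rat \<Rightarrow> int" where "num q = fst (quotient_of q)"
definition den :: "rat \<Rightarrow> int" where "den q = snd (quotient_of q)"

end

theory Submission
  imports Defs
begin

(*
  Let q = a/b and let p/r be its left neighbour in the Farey sequence of order b, so that
  a r - b p = 1. As (p, r), (a, b) is a unimodular basis of Z^2, every reduced u/v in
  [(p + t a)/(r + t b), a/b) is (u, v) = d (p, r) + s (a, b) with d >= 1 and s >= t d, and
  v < 2 (r + t b) forces d = 1: u/v is then a left neighbour (p + s a)/(r + s b) of q. The same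
  holds to the right of q with (a - p, b - r) in place of (p, r), and a left and a right
  neighbour of q are always similarly ordered.
  Now let x <= q <= y in the Farey sequence of order n with num x < num y and den y < den x.
  Then x and y are not both neighbours of q, so on one side of q all neighbours with denominator
  in (n/2, n] lie strictly between x and y (all those with denominator in (0, n] if q = x or
  q = y). There are more than n/(2b) - 1 of them, so [x, y] contains more than
  (n + b + 1)/(2b) + 1 fractions of the sequence.
*)

lemma Fract_num_den [simp]: "Fract (num x) (den x) = x"
  by (simp add: num_def den_def)

lemma den_pos: "0 < den x"
  by (simp add: den_def quotient_of_denom_pos')

lemma coprime_num_den: "coprime (num x) (den x)"
  by (simp add: num_def den_def quotient_of_coprime)

lemma Fract_le_Fract_iff:
  "0 < b \<Longrightarrow> 0 < d \<Longrightarrow> Fract a b \<le> Fract c d \<longleftrightarrow> a * d \<le> c * b"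
  by simp

lemma Fract_less_Fract_iff:
  "0 < b \<Longrightarrow> 0 < d \<Longrightarrow> Fract a b < Fract c d \<longleftrightarrow> a * d < c * b"
  by simp

lemma le_Fract_iff: "0 < v \<Longrightarrow> x \<le> Fract u v \<longleftrightarrow> num x * v \<le> u * den x"
  by (metis Fract_le_Fract_iff Fract_num_den den_pos)

lemma Fract_le_iff: "0 < v \<Longrightarrow> Fract u v \<le> x \<longleftrightarrow> u * den x \<le> num x * v"
  by (metis Fract_le_Fract_iff Fract_num_den den_pos)

lemma less_Fract_iff: "0 < v \<Longrightarrow> x < Fract u v \<longleftrightarrow> num x * v < u * den x"
  by (metis Fract_less_Fract_iff Fract_num_den den_pos)

lemma Fract_less_iff: "0 < v \<Longrightarrow> Fract u v < x \<longleftrightarrow> u * den x < num x * v"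
  by (metis Fract_less_Fract_iff Fract_num_den den_pos)

lemma den_Fract_dvd: assumes "0 < v" shows "den (Fract u v) dvd v"
proof -
  let ?x = "Fract u v"
  have "num ?x * v = u * den ?x"
    using eq_rat(1)[of "den ?x" v "num ?x" u] den_pos[of ?x] assms by simp
  then have "den ?x dvd num ?x * v" by simp
  then show ?thesis using coprime_num_den by (simp add: coprime_dvd_mult_right_iff coprime_commute)
qed

lemma num_den_Fract:
  assumes "0 < v" "coprime u v"
  shows "num (Fract u v) = u" "den (Fract u v) = v"
  using assms by (simp_all add: num_def den_def quotient_of_Fract)

lemma farey_set_iff: "x \<in> farey_set n \<longleftrightarrow> 0 \<le> num x \<and> num x \<le> den x \<and> den x \<le> int n"
proof -
  have "0 \<le> x \<longleftrightarrow> 0 \<le> num x" "x \<le> 1 \<longleftrightarrow> num x \<le> den x"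
    using zero_le_Fract_iff Fract_le_one_iff den_pos Fract_num_den by metis+
  then show ?thesis by (auto simp: farey_set_def den_def[symmetric])
qed

lemma Fract_in_farey_set:
  assumes "0 \<le> u" "u \<le> v" "0 < v" "v \<le> int n"
  shows "Fract u v \<in> farey_set n"
proof -
  have "den (Fract u v) \<le> v" using den_Fract_dvd assms(3) by (simp add: zdvd_imp_le)
  then show ?thesis using assms by (simp add: farey_set_def den_def zero_le_Fract_iff Fract_le_one_iff)
qed

lemma finite_farey_set: "finite (farey_set n)"
proof (rule finite_subset)
  show "farey_set n \<subseteq> (\<lambda>(u, v). Fract u v) ` ({0..int n} \<times> {0..int n})"
  proof
    fix x assume "x \<in> farey_set n"
    then have "(num x, den x) \<in> {0..int n} \<times> {0..int n}" by (auto simp: farey_set_iff)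
    then show "x \<in> (\<lambda>(u, v). Fract u v) ` ({0..int n} \<times> {0..int n})"
      by (metis (no_types, lifting) Fract_num_den case_prod_conv image_eqI)
  qed
qed simp

definition farey_between :: "nat \<Rightarrow> rat \<Rightarrow> rat \<Rightarrow> rat set" where
  "farey_between n x y = {z \<in> farey_set n. x \<le> z \<and> z \<le> y}"

lemma finite_farey_between: "finite (farey_between n x y)"
  unfolding farey_between_def using finite_farey_set by simp

lemma set_farey: "set (farey n) = farey_set n"
  by (simp add: farey_def finite_farey_set)

lemma sorted_farey: "sorted_wrt (<) (farey n)"
  by (simp add: farey_def)

lemma card_sorted_between_le:
  fixes xs :: "'a::linorder list"
  assumes sorted: "sorted_wrt (<) xs" and "k \<le> l" "l < length xs"
  shows "card {z \<in> set xs. xs ! k \<le> z \<and> z \<le> xs ! l} \<le> l - k + 1"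
proof -
  have "{z \<in> set xs. xs ! k \<le> z \<and> z \<le> xs ! l} \<subseteq> (!) xs ` {k..l}"
  proof
    fix z assume z: "z \<in> {z \<in> set xs. xs ! k \<le> z \<and> z \<le> xs ! l}"
    then obtain j where j: "j < length xs" "z = xs ! j" by (auto simp: in_set_conv_nth)
    have "k \<le> j" using z j sorted_wrt_nth_less[OF sorted, of j k] assms(2,3) by force
    moreover have "j \<le> l" using z j sorted_wrt_nth_less[OF sorted, of l j] by force
    ultimately show "z \<in> (!) xs ` {k..l}" using j by auto
  qed
  then have "card {z \<in> set xs. xs ! k \<le> z \<and> z \<le> xs ! l} \<le> card ((!) xs ` {k..l})"
    by (intro card_mono) auto
  also have "\<dots> \<le> l - k + 1" using card_image_le[of "{k..l}" "(!) xs"] by simp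
  finally show ?thesis .
qed

lemma card_farey_between_nth_le:
  assumes "k \<le> l" "l < length (farey n)"
  shows "card (farey_between n (farey n ! k) (farey n ! l)) \<le> l - k + 1"
  using card_sorted_between_le[OF sorted_farey assms] by (simp add: farey_between_def set_farey)

lemma card_disjoint_image_le:
  assumes "finite B" "A \<subseteq> B" "g ` I \<subseteq> B - A" "inj_on g I"
  shows "card A + card I \<le> card B"
proof -
  have "finite I" using assms(1,3,4) finite_image_iff finite_subset by blast
  then have "card A + card I = card (A \<union> g ` I)"
    using assms by (subst card_Un_disjoint) (auto intro: finite_subset simp: card_image)
  also have "\<dots> \<le> card B" using assms by (intro card_mono) auto
  finally show ?thesis .
qed

lemma progression_window:
  fixes m M r b :: int
  assumes "0 < b"
  obtains I where "\<And>t. t \<in> I \<Longrightarrow> m < r + t * b \<and> r + t * b \<le> M"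
    and "M - m - b < b * int (card I)"
proof
  have div_bounds: "b * (z div b) \<le> z" "z < b * (z div b) + b" for z
    using pos_mod_bound[OF assms, of z] pos_mod_sign[OF assms, of z] mult_div_mod_eq[of b z]
    by linarith+
  let ?lo = "(m - r) div b + 1" and ?hi = "(M - r) div b"
  show "m < r + t * b \<and> r + t * b \<le> M" if "t \<in> {?lo..?hi}" for t
  proof
    have "b * ?lo \<le> b * t" "b * t \<le> b * ?hi"
      using that assms by (auto intro!: mult_left_mono simp del: mult_le_cancel_left_pos)
    then have "b * ((m - r) div b) + b \<le> b * t" "b * t \<le> b * ?hi" by (simp_all add: distrib_left)
    then show "m < r + t * b" "r + t * b \<le> M"
      using div_bounds[of "m - r"] div_bounds[of "M - r"] unfolding mult.commute[of t b] by linarith+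
  qed
  have "b * (?hi - ?lo + 1) \<le> b * int (nat (?hi - ?lo + 1))" using assms by (intro mult_left_mono) auto
  then show "M - m - b < b * int (card {?lo..?hi})"
    using div_bounds[of "m - r"] div_bounds[of "M - r"] by (simp add: algebra_simps)
qed

lemma coprime_bezout_bounded:
  fixes a b :: int
  assumes "coprime a b" "1 < b"
  obtains p r where "a * r - b * p = 1" "0 < r" "r < b"
proof -
  obtain x y where xy: "x * a + y * b = 1" using bezout_int[of a b] assms(1) by auto
  define r where "r = x mod b"
  define p where "p = - y - a * (x div b)"
  have det: "a * r - b * p = 1"
    using xy unfolding r_def p_def by (simp add: algebra_simps minus_mod_eq_mult_div [symmetric])
  moreover have "r \<noteq> 0"
  proof
    assume "r = 0"
    with det have "b dvd 1" by (metis diff_0 dvd_minus_iff dvd_triv_left mult_zero_right)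
    with assms(2) show False by (simp add: zdvd_imp_le)
  qed
  moreover have "0 \<le> r" "r < b" using assms(2) unfolding r_def by simp_all
  ultimately show ?thesis using that by simp
qed

lemma coprime_common_factor_eq_1:
  fixes d u v :: int
  assumes "coprime (d * u) (d * v)" "0 \<le> d"
  shows "d = 1"
proof -
  have "is_unit d" using assms(1) by (rule coprime_common_divisor) simp_all
  with assms(2) show ?thesis by (simp add: zdvd1_eq)
qed

lemma unimodular_cone_coords:
  fixes a b p r u v t :: int
  assumes det: "a * r - b * p = 1" and "(p + t * a) * v \<le> u * (r + t * b)" "u * b \<le> a * v"
  shows "\<exists>d s. 0 \<le> d \<and> t * d \<le> s \<and> u = d * p + s * a \<and> v = d * r + s * b"
proof (intro exI conjI)
  show "0 \<le> a * v - b * u" using assms(3) by (simp add: mult.commute)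
  have "u * (r + t * b) - (p + t * a) * v = (r * u - p * v) - t * (a * v - b * u)"
    by (simp add: algebra_simps)
  then show "t * (a * v - b * u) \<le> r * u - p * v" using assms(2) by linarith
  have "(a * v - b * u) * p + (r * u - p * v) * a = u * (a * r - b * p)"
    "(a * v - b * u) * r + (r * u - p * v) * b = v * (a * r - b * p)"
    by (simp_all add: algebra_simps)
  then show "u = (a * v - b * u) * p + (r * u - p * v) * a"
    "v = (a * v - b * u) * r + (r * u - p * v) * b"
    using det by simp_all
qed

lemma cone_coord_eq_1:
  fixes d s t r b :: int
  assumes "0 < d" "t * d \<le> s" "0 \<le> t" "0 \<le> r" "0 \<le> b" "d * r + s * b < 2 * (r + t * b)"
  shows "d = 1"
proof (rule ccontr)
  assume "d \<noteq> 1"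
  then have "2 \<le> d" using assms(1) by simp
  then have "2 * r \<le> d * r" "t * 2 \<le> s" using assms(2-4) mult_left_mono[of 2 d t]
    by (simp_all add: mult_right_mono)
  then have "2 * r + (t * 2) * b \<le> d * r + s * b" using assms(5) by (simp add: mult_right_mono add_mono)
  then show False using assms(6) by (simp add: algebra_simps)
qed

locale farey_neighbours =
  fixes a b p r :: int
  assumes det: "a * r - b * p = 1"
    and r_pos: "0 < r" and r_less: "r < b"
    and a_pos: "0 < a" and a_less: "a < b"
begin

lemma b_pos: "0 < b"
  using r_pos r_less by simp

lemma p_bounds: "0 \<le> p" "p < a" "p < r"
proof -
  have bp: "b * p = a * r - 1" using det by simp
  have "a \<le> a * r" "a * r < a * b" "a * r < b * r"
    using a_pos r_pos r_less a_less by (simp_all add: mult_strict_right_mono)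
  then have "0 * b \<le> p * b" "p * b < a * b" "p * b < r * b"
    using bp a_pos unfolding mult.commute[of p] mult.commute[of r b] by linarith+
  then show "0 \<le> p" "p < a" "p < r" using b_pos by (simp_all add: zero_le_mult_iff)
qed

lemma right_det: "b * (a - p) - a * (b - r) = 1"
  using det by (simp add: algebra_simps)

lemma right_num_le_den: "a - p \<le> b - r"
proof -
  have "b * (a - p) = a * (b - r) + 1" using right_det by simp
  also have "\<dots> \<le> (b - 1) * (b - r) + 1" using a_less r_less by (simp add: mult_right_mono)
  also have "\<dots> \<le> b * (b - r)" using r_less by (simp add: algebra_simps)
  finally show ?thesis using b_pos by simp
qed

lemma num_den_pivot: "num (Fract a b) = a" "den (Fract a b) = b"
proof -
  have "coprime a b" by (rule coprimeI) (metis det dvd_diff dvd_mult2)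
  then show "num (Fract a b) = a" "den (Fract a b) = b" using num_den_Fract b_pos by simp_all
qed

text \<open>\<open>left_nbr t\<close> and \<open>right_nbr t\<close> are the neighbours of \<open>a/b\<close> in the Farey sequences
  of order \<open>r + t b\<close> and \<open>b - r + t b\<close>.\<close>

definition left_nbr :: "int \<Rightarrow> rat" where
  "left_nbr t = Fract (p + t * a) (r + t * b)"

definition right_nbr :: "int \<Rightarrow> rat" where
  "right_nbr t = Fract (a - p + t * a) (b - r + t * b)"

lemma nbr_den_pos: "0 \<le> t \<Longrightarrow> 0 < r + t * b" "0 \<le> t \<Longrightarrow> 0 < b - r + t * b"
  using r_pos r_less b_pos by (simp_all add: add_pos_nonneg)

lemma left_nbr_less_pivot:
  assumes "0 \<le> t" shows "left_nbr t < Fract a b"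
proof -
  have "(p + t * a) * b < a * (r + t * b)" using det by (simp add: algebra_simps)
  then show ?thesis
    unfolding left_nbr_def using Fract_less_Fract_iff[OF nbr_den_pos(1)[OF assms] b_pos] by simp
qed

lemma pivot_less_right_nbr:
  assumes "0 \<le> t" shows "Fract a b < right_nbr t"
proof -
  have "a * (b - r + t * b) < (a - p + t * a) * b" using right_det by (simp add: algebra_simps)
  then show ?thesis
    unfolding right_nbr_def using Fract_less_Fract_iff[OF b_pos nbr_den_pos(2)[OF assms]] by simp
qed

lemma strict_mono_left_nbr: "strict_mono_on {0..} left_nbr"
proof (rule strict_mono_onI)
  fix s t :: int assume "s \<in> {0..}" "t \<in> {0..}" "s < t"
  have "(p + t * a) * (r + s * b) - (p + s * a) * (r + t * b) = (t - s) * (a * r - b * p)"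
    by (simp add: algebra_simps)
  then have "(p + s * a) * (r + t * b) < (p + t * a) * (r + s * b)"
    using det \<open>s < t\<close> by simp
  then show "left_nbr s < left_nbr t"
    unfolding left_nbr_def using Fract_less_Fract_iff[OF nbr_den_pos(1) nbr_den_pos(1)]
      \<open>s \<in> {0..}\<close> \<open>t \<in> {0..}\<close> by simp
qed

lemma strict_antimono_right_nbr: "strict_antimono_on {0..} right_nbr"
proof (rule monotone_onI)
  fix s t :: int assume "s \<in> {0..}" "t \<in> {0..}" "s < t"
  have "(a - p + s * a) * (b - r + t * b) - (a - p + t * a) * (b - r + s * b)
      = (t - s) * (b * (a - p) - a * (b - r))"
    by (simp add: algebra_simps)
  then have "(a - p + t * a) * (b - r + s * b) < (a - p + s * a) * (b - r + t * b)"
    using right_det \<open>s < t\<close> by simp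
  then show "right_nbr t < right_nbr s"
    unfolding right_nbr_def using Fract_less_Fract_iff[OF nbr_den_pos(2) nbr_den_pos(2)]
      \<open>s \<in> {0..}\<close> \<open>t \<in> {0..}\<close> by simp
qed

lemma left_nbr_in_farey_set:
  assumes "0 \<le> t" "r + t * b \<le> int n"
  shows "left_nbr t \<in> farey_set n"
  unfolding left_nbr_def
proof (rule Fract_in_farey_set)
  have "0 \<le> t * a" "t * a \<le> t * b" using assms(1) a_pos a_less by (simp_all add: mult_left_mono)
  then show "0 \<le> p + t * a" "p + t * a \<le> r + t * b" using p_bounds by linarith+
qed (use assms nbr_den_pos in auto)

lemma right_nbr_in_farey_set:
  assumes "0 \<le> t" "b - r + t * b \<le> int n"
  shows "right_nbr t \<in> farey_set n"
  unfolding right_nbr_def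
proof (rule Fract_in_farey_set)
  have "0 \<le> t * a" "t * a \<le> t * b" using assms(1) a_pos a_less by (simp_all add: mult_left_mono)
  then show "0 \<le> a - p + t * a" "a - p + t * a \<le> b - r + t * b"
    using p_bounds right_num_le_den by linarith+
qed (use assms nbr_den_pos in auto)

lemma left_nbr_le_imp_coords:
  assumes "0 \<le> t" "left_nbr t \<le> x" "x \<le> Fract a b"
  shows "\<exists>d s. 0 \<le> d \<and> t * d \<le> s \<and> num x = d * p + s * a \<and> den x = d * r + s * b"
proof (rule unimodular_cone_coords[OF det])
  show "(p + t * a) * den x \<le> num x * (r + t * b)"
    using assms(2) Fract_le_iff[OF nbr_den_pos(1)[OF assms(1)]] unfolding left_nbr_def by simp
  show "num x * b \<le> a * den x"
    using assms(3) le_Fract_iff[OF b_pos] by simp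
qed

lemma right_nbr_ge_imp_coords:
  assumes "0 \<le> t" "x \<le> right_nbr t" "Fract a b \<le> x"
  shows "\<exists>d s. 0 \<le> d \<and> t * d \<le> s \<and> num x = d * (a - p) + s * a \<and> den x = d * (b - r) + s * b"
proof -
  have "(b - r + t * b) * num x \<le> den x * (a - p + t * a)"
    using assms(2) le_Fract_iff[OF nbr_den_pos(2)[OF assms(1)]] unfolding right_nbr_def
    by (simp add: mult.commute)
  moreover have "den x * a \<le> b * num x"
    using assms(3) Fract_le_iff[OF b_pos] by (simp add: mult.commute)
  ultimately show ?thesis using unimodular_cone_coords[OF right_det] by blast
qed

lemma num_den_eq_left_nbr_0:
  assumes "left_nbr 0 \<le> x" "x \<le> Fract a b" "num x < a"
  shows "num x = p \<and> den x = r"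
proof -
  obtain d s where ds: "0 \<le> d" "0 \<le> s" "num x = d * p + s * a" "den x = d * r + s * b"
    using left_nbr_le_imp_coords[of 0 x] assms by auto
  have "s = 0"
  proof (rule ccontr)
    assume "s \<noteq> 0"
    then have "a \<le> s * a" using ds(2) a_pos by simp
    moreover have "0 \<le> d * p" using ds(1) p_bounds by simp
    ultimately show False using ds(3) assms(3) by linarith
  qed
  moreover have "d = 1"
    using coprime_num_den[of x] ds calculation by (intro coprime_common_factor_eq_1[of d p r]) auto
  ultimately show ?thesis using ds by simp
qed

lemma num_den_eq_right_nbr_0:
  assumes "x \<le> right_nbr 0" "Fract a b \<le> x" "den x < b"
  shows "num x = a - p \<and> den x = b - r"
proof -
  obtain d s where ds: "0 \<le> d" "0 \<le> s" "num x = d * (a - p) + s * a" "den x = d * (b - r) + s * b"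
    using right_nbr_ge_imp_coords[of 0 x] assms by auto
  have "s = 0"
  proof (rule ccontr)
    assume "s \<noteq> 0"
    then have "b \<le> s * b" using ds(2) b_pos by simp
    moreover have "0 \<le> d * (b - r)" using ds(1) r_less by simp
    ultimately show False using ds(4) assms(3) by linarith
  qed
  moreover have "d = 1"
    using coprime_num_den[of x] ds calculation
    by (intro coprime_common_factor_eq_1[of d "a - p" "b - r"]) auto
  ultimately show ?thesis using ds by simp
qed

lemma num_den_eq_left_nbr:
  assumes "0 \<le> t" "left_nbr t \<le> x" "x < Fract a b" "den x < 2 * (r + t * b)"
  shows "\<exists>s. num x = p + s * a \<and> den x = r + s * b"
proof -
  obtain d s where ds: "0 \<le> d" "t * d \<le> s" "num x = d * p + s * a" "den x = d * r + s * b"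
    using left_nbr_le_imp_coords[of t x] assms by auto
  have "d \<noteq> 0"
  proof
    assume "d = 0"
    then have "num x * b = a * den x" using ds by simp
    then show False using assms(3) less_Fract_iff[OF b_pos] by simp
  qed
  then have "d = 1"
    using ds assms(1,4) r_pos b_pos by (intro cone_coord_eq_1[of d t s r b]) auto
  then show ?thesis using ds by auto
qed

lemma num_den_eq_right_nbr:
  assumes "0 \<le> t" "x \<le> right_nbr t" "Fract a b < x" "den x < 2 * (b - r + t * b)"
  shows "\<exists>s. num x = a - p + s * a \<and> den x = b - r + s * b"
proof -
  obtain d s where ds: "0 \<le> d" "t * d \<le> s" "num x = d * (a - p) + s * a" "den x = d * (b - r) + s * b"
    using right_nbr_ge_imp_coords[of t x] assms by auto
  have "d \<noteq> 0"
  proof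
    assume "d = 0"
    then have "a * den x = num x * b" using ds by simp
    then show False using assms(3) Fract_less_iff[OF b_pos] by simp
  qed
  then have "d = 1"
    using ds assms(1,4) r_less b_pos by (intro cone_coord_eq_1[of d t s "b - r" b]) auto
  then show ?thesis using ds by auto
qed

lemma left_right_nbrs_similarly_ordered:
  assumes "p + s * a < a - p + s' * a"
  shows "r + s * b \<le> b - r + s' * b"
proof (rule ccontr)
  assume "\<not> ?thesis"
  then have den: "b - r + s' * b < r + s * b" by simp
  consider "s' < s" | "s' = s" | "s < s'" by linarith
  then show False
  proof cases
    case 1
    then have "(s' + 1) * a \<le> s * a" using a_pos by (intro mult_right_mono) auto
    then show False using assms p_bounds by (simp add: algebra_simps)
  next
    case 2
    then have "2 * p + 1 \<le> a" "b \<le> 2 * r - 1" using assms den by simp_all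
    then have "(2 * p + 1) * r \<le> a * r" "b * p \<le> (2 * r - 1) * p"
      using r_pos p_bounds by (simp_all add: mult_right_mono)
    then have "r + p \<le> 1" using det by (simp add: algebra_simps)
    then show False using r_pos r_less p_bounds den 2 by simp
  next
    case 3
    then have "(s + 1) * b \<le> s' * b" using b_pos by (intro mult_right_mono) auto
    then show False using den r_less by (simp add: algebra_simps)
  qed
qed

lemma similarly_ordered_beyond_nbrs:
  assumes "0 \<le> t" "left_nbr t \<le> x" "x < Fract a b" "den x < 2 * (r + t * b)"
    and "0 \<le> t'" "y \<le> right_nbr t'" "Fract a b < y" "den y < 2 * (b - r + t' * b)"
    and "num x < num y"
  shows "den x \<le> den y"
  using num_den_eq_left_nbr[OF assms(1-4)] num_den_eq_right_nbr[OF assms(5-8)] assms(9)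
    left_right_nbrs_similarly_ordered by force

lemma card_farey_between_left_nbrs:
  assumes "x \<in> farey_set n" "y \<in> farey_set n" "b \<le> int n" "x \<le> Fract a b" "Fract a b \<le> y"
    and "\<And>t. t \<in> I \<Longrightarrow> 0 \<le> t \<and> r + t * b \<le> int n \<and> x < left_nbr t"
  shows "card {x, Fract a b, y} + card I \<le> card (farey_between n x y)"
proof (rule card_disjoint_image_le[OF finite_farey_between])
  show "{x, Fract a b, y} \<subseteq> farey_between n x y"
    using assms(1-5) Fract_in_farey_set[of a b n] a_pos a_less
    by (auto simp: farey_between_def)
  show "left_nbr ` I \<subseteq> farey_between n x y - {x, Fract a b, y}"
    using assms(5,6) left_nbr_in_farey_set left_nbr_less_pivot
    by (fastforce simp: farey_between_def)
  show "inj_on left_nbr I"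
    using strict_mono_on_imp_inj_on[OF strict_mono_left_nbr] assms(6) by (auto intro: inj_on_subset)
qed

lemma card_farey_between_right_nbrs:
  assumes "x \<in> farey_set n" "y \<in> farey_set n" "b \<le> int n" "x \<le> Fract a b" "Fract a b \<le> y"
    and "\<And>t. t \<in> I \<Longrightarrow> 0 \<le> t \<and> b - r + t * b \<le> int n \<and> right_nbr t < y"
  shows "card {x, Fract a b, y} + card I \<le> card (farey_between n x y)"
proof (rule card_disjoint_image_le[OF finite_farey_between])
  show "{x, Fract a b, y} \<subseteq> farey_between n x y"
    using assms(1-5) Fract_in_farey_set[of a b n] a_pos a_less
    by (auto simp: farey_between_def)
  show "right_nbr ` I \<subseteq> farey_between n x y - {x, Fract a b, y}"
    using assms(4,6) right_nbr_in_farey_set pivot_less_right_nbr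
    by (fastforce simp: farey_between_def)
  show "inj_on right_nbr I"
    using strict_antimono_iff_antimono[THEN iffD1, OF strict_antimono_right_nbr] assms(6)
    by (auto intro: inj_on_subset)
qed

lemma nbr_index_nonneg: "0 < r + t * b \<Longrightarrow> 0 \<le> t" "0 < b - r + t * b \<Longrightarrow> 0 \<le> t"
proof -
  have "t * b \<le> -1 * b" if "t < 0" using that b_pos by (intro mult_right_mono) auto
  then show "0 < r + t * b \<Longrightarrow> 0 \<le> t" "0 < b - r + t * b \<Longrightarrow> 0 \<le> t"
    using r_pos r_less by force+
qed

lemma left_nbrs_fill_if_pivot_is_right_end:
  assumes x: "x \<in> farey_set n" and y: "y \<in> farey_set n" and "b \<le> int n"
    and xq: "x \<le> Fract a b" and yq: "y = Fract a b" and num: "num x < num y" and den: "den y < den x"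
  obtains I :: "int set" where "card {x, Fract a b, y} + card I \<le> card (farey_between n x y)"
    and "int n - b < b * int (card I)"
proof -
  have "x < left_nbr 0"
  proof (rule ccontr)
    assume "\<not> x < left_nbr 0"
    then have "den x = r" using num_den_eq_left_nbr_0 xq num yq num_den_pivot by auto
    then show False using den yq num_den_pivot r_less by simp
  qed
  obtain I where I: "\<And>t. t \<in> I \<Longrightarrow> 0 < r + t * b \<and> r + t * b \<le> int n"
    and card_I: "int n - 0 - b < b * int (card I)"
    using progression_window[OF b_pos] by blast
  have "card {x, Fract a b, y} + card I \<le> card (farey_between n x y)"
  proof (rule card_farey_between_left_nbrs[OF x y \<open>b \<le> int n\<close> xq])
    show "Fract a b \<le> y" using yq by simp
    fix t assume "t \<in> I"
    then have "0 \<le> t" "r + t * b \<le> int n" using I nbr_index_nonneg(1) by auto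
    moreover have "left_nbr 0 \<le> left_nbr t"
      using strict_mono_left_nbr \<open>0 \<le> t\<close> by (auto simp: monotone_on_def order_le_less)
    ultimately show "0 \<le> t \<and> r + t * b \<le> int n \<and> x < left_nbr t"
      using \<open>x < left_nbr 0\<close> by simp
  qed
  with card_I show ?thesis by (intro that[of I]) simp_all
qed

lemma right_nbrs_fill_if_pivot_is_left_end:
  assumes x: "x \<in> farey_set n" and y: "y \<in> farey_set n" and "b \<le> int n"
    and xq: "x = Fract a b" and qy: "Fract a b \<le> y" and num: "num x < num y" and den: "den y < den x"
  obtains I :: "int set" where "card {x, Fract a b, y} + card I \<le> card (farey_between n x y)"
    and "int n - b < b * int (card I)"
proof -
  have "right_nbr 0 < y"
  proof (rule ccontr)
    assume "\<not> right_nbr 0 < y"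
    then have "num y = a - p" using num_den_eq_right_nbr_0 qy den xq num_den_pivot by auto
    then show False using num xq num_den_pivot p_bounds by simp
  qed
  obtain I where I: "\<And>t. t \<in> I \<Longrightarrow> 0 < b - r + t * b \<and> b - r + t * b \<le> int n"
    and card_I: "int n - 0 - b < b * int (card I)"
    using progression_window[OF b_pos] by blast
  have "card {x, Fract a b, y} + card I \<le> card (farey_between n x y)"
  proof (rule card_farey_between_right_nbrs[OF x y \<open>b \<le> int n\<close> _ qy])
    show "x \<le> Fract a b" using xq by simp
    fix t assume "t \<in> I"
    then have "0 \<le> t" "b - r + t * b \<le> int n" using I nbr_index_nonneg(2) by auto
    moreover have "right_nbr t \<le> right_nbr 0"
      using strict_antimono_right_nbr \<open>0 \<le> t\<close> by (auto simp: monotone_on_def order_le_less)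
    ultimately show "0 \<le> t \<and> b - r + t * b \<le> int n \<and> right_nbr t < y"
      using \<open>right_nbr 0 < y\<close> by simp
  qed
  with card_I show ?thesis by (intro that[of I]) simp_all
qed

lemma nbrs_fill_if_pivot_is_inner:
  assumes x: "x \<in> farey_set n" and y: "y \<in> farey_set n" and "b \<le> int n"
    and xq: "x < Fract a b" and qy: "Fract a b < y" and num: "num x < num y" and den: "den y < den x"
  obtains I :: "int set" where "card {x, Fract a b, y} + card I \<le> card (farey_between n x y)"
    and "int n - int n div 2 - b < b * int (card I)"
proof -
  obtain I where I: "\<And>t. t \<in> I \<Longrightarrow> int n div 2 < r + t * b \<and> r + t * b \<le> int n"
    and card_I: "int n - int n div 2 - b < b * int (card I)"
    using progression_window[OF b_pos] by blast
  obtain J where J: "\<And>t. t \<in> J \<Longrightarrow> int n div 2 < b - r + t * b \<and> b - r + t * b \<le> int n"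
    and card_J: "int n - int n div 2 - b < b * int (card J)"
    using progression_window[OF b_pos] by blast
  have "0 \<le> int n div 2" by simp
  then have I_nonneg: "0 \<le> t" if "t \<in> I" for t
    by (intro nbr_index_nonneg(1)) (use I[OF that] in linarith)
  have J_nonneg: "0 \<le> t" if "t \<in> J" for t
    using \<open>0 \<le> int n div 2\<close> by (intro nbr_index_nonneg(2)) (use J[OF that] in linarith)
  consider "\<forall>t\<in>I. x < left_nbr t" | "\<forall>t\<in>J. right_nbr t < y"
    | "\<exists>t\<in>I. left_nbr t \<le> x" "\<exists>t\<in>J. y \<le> right_nbr t"
    by (meson not_le)
  then show ?thesis
  proof cases
    case 1
    have "card {x, Fract a b, y} + card I \<le> card (farey_between n x y)"
      using 1 I I_nonneg xq qy
      by (intro card_farey_between_left_nbrs[OF x y \<open>b \<le> int n\<close>]) auto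
    with card_I show ?thesis by (intro that[of I])
  next
    case 2
    have "card {x, Fract a b, y} + card J \<le> card (farey_between n x y)"
      using 2 J J_nonneg xq qy
      by (intro card_farey_between_right_nbrs[OF x y \<open>b \<le> int n\<close>]) auto
    with card_J show ?thesis by (intro that[of J])
  next
    case 3
    then obtain t t' where "t \<in> I" "left_nbr t \<le> x" "t' \<in> J" "y \<le> right_nbr t'"
      by blast
    moreover have "den x \<le> int n" "den y \<le> int n" using x y by (simp_all add: farey_set_iff)
    ultimately have "den x \<le> den y"
      using similarly_ordered_beyond_nbrs[of t x t' y] I J I_nonneg J_nonneg xq qy num by fastforce
    with den show ?thesis by simp
  qed
qed

theorem card_farey_between_gt_around_pivot:
  assumes x: "x \<in> farey_set n" and y: "y \<in> farey_set n" and "b \<le> int n"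
    and xq: "x \<le> Fract a b" and qy: "Fract a b \<le> y" and num: "num x < num y" and den: "den y < den x"
  shows "int n + b + 1 < 2 * b * (int (card (farey_between n x y)) - 1)"
proof -
  let ?C = "int (card (farey_between n x y))"
  have "x \<noteq> y" using num by auto
  show ?thesis
  proof (cases "x = Fract a b \<or> y = Fract a b")
    case True
    then have "card {x, Fract a b, y} = 2" using \<open>x \<noteq> y\<close> by auto
    obtain I :: "int set" where "2 + card I \<le> card (farey_between n x y)" "int n - b < b * int (card I)"
      using True left_nbrs_fill_if_pivot_is_right_end[OF x y \<open>b \<le> int n\<close> xq _ num den]
        right_nbrs_fill_if_pivot_is_left_end[OF x y \<open>b \<le> int n\<close> _ qy num den]
        \<open>card {x, Fract a b, y} = 2\<close> by metis
    moreover from this(1) have "2 * b * (1 + int (card I)) \<le> 2 * b * (?C - 1)"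
      using b_pos by (intro mult_left_mono) simp_all
    ultimately show ?thesis using \<open>b \<le> int n\<close> by (simp add: algebra_simps)
  next
    case False
    then have "card {x, Fract a b, y} = 3" using \<open>x \<noteq> y\<close> by auto
    obtain I :: "int set" where "3 + card I \<le> card (farey_between n x y)"
      and "int n - int n div 2 - b < b * int (card I)"
      using False xq qy nbrs_fill_if_pivot_is_inner[OF x y \<open>b \<le> int n\<close> _ _ num den]
        \<open>card {x, Fract a b, y} = 3\<close> by (metis order_le_less)
    moreover from this(1) have "2 * b * (2 + int (card I)) \<le> 2 * b * (?C - 1)"
      using b_pos by (intro mult_left_mono) simp_all
    moreover have "2 * (int n div 2) \<le> int n" by simp
    ultimately show ?thesis using b_pos by (simp add: algebra_simps)
  qed
qed

end

theorem card_farey_between_gt: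
  assumes x: "x \<in> farey_set n" and y: "y \<in> farey_set n" and q: "q \<in> farey_set n"
    and "x \<le> q" "q \<le> y" and num: "num x < num y" and den: "den y < den x"
  shows "int n + den q + 1 < 2 * den q * (int (card (farey_between n x y)) - 1)"
proof -
  have "x \<noteq> 0" using den den_pos[of y] by (auto simp: den_def)
  then have "0 < x" using x by (simp add: farey_set_def order_less_le)
  have "y \<noteq> 1"
  proof
    assume "y = 1"
    then have "num x = 0" using num x by (simp add: num_def farey_set_iff)
    then show False using \<open>x \<noteq> 0\<close> Fract_num_den[of x] by (simp add: Fract_of_int_quotient)
  qed
  then have "y < 1" using y by (simp add: farey_set_def)
  have "0 < num q" "num q < den q"
    using \<open>0 < x\<close> \<open>y < 1\<close> \<open>x \<le> q\<close> \<open>q \<le> y\<close>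
      zero_less_Fract_iff[OF den_pos, of "num q" q] Fract_less_one_iff[OF den_pos, of "num q" q]
    by simp_all
  then have "1 < den q" by simp
  then obtain p r where "num q * r - den q * p = 1" "0 < r" "r < den q"
    using coprime_bezout_bounded coprime_num_den by blast
  then interpret farey_neighbours "num q" "den q" p r
    using \<open>0 < num q\<close> \<open>num q < den q\<close> by unfold_locales
  show ?thesis
    using card_farey_between_gt_around_pivot[OF x y] assms(4-) q by (simp add: farey_set_iff)
qed

lemma num_less_imp_den_less:
  assumes "x \<le> y" "0 \<le> num y" "num y < num x"
  shows "den y < den x"
proof -
  have "num x * den y \<le> num y * den x" using assms(1) le_Fract_iff[OF den_pos, of x "num y" y] by simp
  also have "\<dots> < num x * den x" using assms(3) den_pos[of x] by simp
  finally show ?thesis using assms(2,3) by simp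
qed

theorem lemma4:
  fixes n k l :: nat and q :: rat
  assumes "n \<ge> 1"
    and "k \<le> l" and "l < length (farey n)"
    and "q \<in> set (farey n)"
    and "farey n ! k \<le> q" and "q \<le> farey n ! l"
    and "real (l - k) \<le> (real n + real_of_int (den q) + 1) / (2 * real_of_int (den q))"
  shows "(num (farey n ! l) - num (farey n ! k)) * (den (farey n ! l) - den (farey n ! k)) \<ge> 0"
proof (rule ccontr)
  let ?x = "farey n ! k" and ?y = "farey n ! l"
  assume reversed: "\<not> 0 \<le> (num ?y - num ?x) * (den ?y - den ?x)"
  have x: "?x \<in> farey_set n" and y: "?y \<in> farey_set n" and q: "q \<in> farey_set n"
    using assms(2-4) set_farey[of n] by (metis le_less_trans nth_mem)+
  have "num ?x < num ?y \<and> den ?y < den ?x"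
    using reversed num_less_imp_den_less[of ?x ?y] assms(5,6) x y
    by (auto simp: not_le mult_less_0_iff farey_set_iff)
  then have "int n + den q + 1 < 2 * den q * (int (card (farey_between n ?x ?y)) - 1)"
    using card_farey_between_gt[OF x y q] assms(5,6) by blast
  moreover have "2 * den q * (int (card (farey_between n ?x ?y)) - 1) \<le> 2 * den q * int (l - k)"
    using card_farey_between_nth_le[OF assms(2,3)] den_pos[of q] by (intro mult_left_mono) auto
  moreover have "2 * den q * int (l - k) \<le> int n + den q + 1"
  proof -
    have "real (l - k) * (2 * real_of_int (den q)) \<le> real n + real_of_int (den q) + 1"
      using assms(7) den_pos[of q] by (simp add: pos_le_divide_eq)
    then have "real_of_int (2 * den q * int (l - k)) \<le> real_of_int (int n + den q + 1)"
      by (simp add: algebra_simps)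
    then show ?thesis by (simp only: of_int_le_iff)
  qed
  ultimately show False by linarith
qed

end
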